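(* Let $L, H \in \mathcal{L}$ and $g = (w,t) \in S$ with $L^g \leq H$. Then: (a) $\zeta_{L,H,g} = \hat{\zeta}_{L,H,w} - \lambda^w_t$; (b) if $\zeta_{L,H,g} \in Z^1(L,T)$, then $\zeta_{L,H,h} \in Z^1(L,T)$ for all $h \in gT$; (c) there exist $\gamma \in Z^1(L,T)$ and $\sigma \in Z^1(H,T)$ with $C_L(\gamma)^g \leq C_H(\sigma)$ if and only if $\zeta_{L,H,g} \in Z^1(L,T)$; (d) (for $H = L$ and $\gamma \in Z^1(L,T)$) $g$ centralises $C_L(\gamma)$ if and only if $w$ centralises $L$ and $\zeta_{L,L,g} = \gamma^g - \gamma$, where $\gamma^g(l) = \gamma(l^g)^{g^{-1}}$.
   Context: Conventions: for a group $G$ acting on the right on an additive abelian group $M$, $Z^n(G,M)$, $B^n(G,M)$ are normalised cocycles and coboundaries; $\mathrm{Ext}(\tau)$ for $\tau \in Z^2(G,M)$ is $G\times M$ with $(g,m)(h,n) = (gh, m^h+n+\tau(g,h))$. Setting: $S$ is an infinite pro-$p$-group of finite coclass, $T = \gamma_\ell(S)$ ($\ell$ large) with $T\cong\mathbb{Z}_p^d$, $P=S/T$ finite, the series $T_0=T$, $T_{i+1}=[T_i,S]$ having all indices $p$; $T$ is an additive $P$-module via conjugation; $S = \mathrm{Ext}(\rho)$ with $\rho\in Z^2(P,T)$, $\epsilon: S \to P$ the projection, $T = \{(1,t)\}$; $g \in S$ acts on $P$ and $T$ via $\epsilon(g)$. For $L\leq P$, $\overline{L}=\epsilon^{-1}(L)$.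 $\mathcal{L}$ = elementary abelian $L\leq P$ with $\rho_L \in B^2(L,T)$. For $L\in\mathcal{L}$ fix a complement $C_L = \{c_L(l)\}$ to $T$ in $\overline{L}$, $c_L(l) = (l, t_L(l))$; $C_L(\delta) = \{(l,t_L(l)+\delta(l))\}$ for $\delta\in Z^1(L,T)$. For $L,H\in\mathcal{L}$, $g\in S$ with $L^g\leq H$: $\zeta_{L,H,g}: L\to S$, $l\mapsto (c_H(l^g)^{-1})^{g^{-1}} c_L(l)$ (values identified with elements of $T$). For $w\in P$: $\hat{\zeta}_{L,H,w}: L \to T$, $l \mapsto (t_L(l)^w - t_H(l^w) + \rho(l,w) - \rho(w,l^w))^{w^{-1}}$. For $t \in T$: $\lambda_t: L\to T$, $l \mapsto [t,l] := t^l - t$, and $\lambda_t^w: L \to T$, $l \mapsto [t,l^w]^{w^{-1}}$. *)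

theory Defs
  imports "HOL-Algebra.Algebra"
begin

text \<open>P is a group (HOL-Algebra), T is the additive abelian group of type 'b,
  act m g is the right action m^g.\<close>

definition right_action :: "'a monoid \<Rightarrow> ('b::ab_group_add \<Rightarrow> 'a \<Rightarrow> 'b) \<Rightarrow> bool" where
  "right_action P act \<longleftrightarrow>
     (\<forall>g\<in>carrier P. \<forall>m n. act (m + n) g = act m g + act n g) \<and>
     (\<forall>m. act m \<one>\<^bsub>P\<^esub> = m) \<and>
     (\<forall>g\<in>carrier P. \<forall>h\<in>carrier P. \<forall>m. act m (g \<otimes>\<^bsub>P\<^esub> h) = act (act m g) h)"

definition Z2 :: "'a monoid \<Rightarrow> ('b::ab_group_add \<Rightarrow> 'a \<Rightarrow> 'b) \<Rightarrow> ('a \<Rightarrow> 'a \<Rightarrow> 'b) \<Rightarrow> bool" where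
  "Z2 P act \<tau> \<longleftrightarrow>
     (\<forall>g\<in>carrier P. \<tau> \<one>\<^bsub>P\<^esub> g = 0 \<and> \<tau> g \<one>\<^bsub>P\<^esub> = 0) \<and>
     (\<forall>g\<in>carrier P. \<forall>h\<in>carrier P. \<forall>k\<in>carrier P.
        act (\<tau> g h) k + \<tau> (g \<otimes>\<^bsub>P\<^esub> h) k = \<tau> h k + \<tau> g (h \<otimes>\<^bsub>P\<^esub> k))"

definition Z1 :: "'a monoid \<Rightarrow> ('b::ab_group_add \<Rightarrow> 'a \<Rightarrow> 'b) \<Rightarrow> 'a set \<Rightarrow> ('a \<Rightarrow> 'b) \<Rightarrow> bool" where
  "Z1 P act L \<delta> \<longleftrightarrow>
     \<delta> \<one>\<^bsub>P\<^esub> = 0 \<and>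
     (\<forall>l\<in>L. \<forall>m\<in>L. \<delta> (l \<otimes>\<^bsub>P\<^esub> m) = act (\<delta> l) m + \<delta> m)"

definition B2 :: "'a monoid \<Rightarrow> ('b::ab_group_add \<Rightarrow> 'a \<Rightarrow> 'b) \<Rightarrow> 'a set \<Rightarrow> ('a \<Rightarrow> 'a \<Rightarrow> 'b) \<Rightarrow> bool" where
  "B2 P act L \<tau> \<longleftrightarrow>
     (\<exists>f. f \<one>\<^bsub>P\<^esub> = 0 \<and>
          (\<forall>l\<in>L. \<forall>m\<in>L. \<tau> l m = act (f l) m + f m - f (l \<otimes>\<^bsub>P\<^esub> m)))"

definition Ext :: "'a monoid \<Rightarrow> ('b::ab_group_add \<Rightarrow> 'a \<Rightarrow> 'b) \<Rightarrow> ('a \<Rightarrow> 'a \<Rightarrow> 'b) \<Rightarrow> ('a \<times> 'b) monoid" where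
  "Ext P act \<tau> = \<lparr> carrier = carrier P \<times> UNIV,
      monoid.mult = (\<lambda>(g, m) (h, n). (g \<otimes>\<^bsub>P\<^esub> h, act m h + n + \<tau> g h)),
      monoid.one = (\<one>\<^bsub>P\<^esub>, 0) \<rparr>"

definition conj :: "('x, 'm) monoid_scheme \<Rightarrow> 'x \<Rightarrow> 'x \<Rightarrow> 'x" where
  "conj G x g = inv\<^bsub>G\<^esub> g \<otimes>\<^bsub>G\<^esub> x \<otimes>\<^bsub>G\<^esub> g"

definition elementary_abelian :: "'a monoid \<Rightarrow> nat \<Rightarrow> 'a set \<Rightarrow> bool" where
  "elementary_abelian P p L \<longleftrightarrow>
     subgroup L P \<and> (\<forall>x\<in>L. \<forall>y\<in>L. x \<otimes>\<^bsub>P\<^esub> y = y \<otimes>\<^bsub>P\<^esub> x) \<and>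
     (\<forall>x\<in>L. x [^]\<^bsub>P\<^esub> p = \<one>\<^bsub>P\<^esub>)"

definition calL :: "'a monoid \<Rightarrow> ('b::ab_group_add \<Rightarrow> 'a \<Rightarrow> 'b) \<Rightarrow> ('a \<Rightarrow> 'a \<Rightarrow> 'b) \<Rightarrow> nat \<Rightarrow> 'a set \<Rightarrow> bool" where
  "calL P act \<rho> p L \<longleftrightarrow> elementary_abelian P p L \<and> B2 P act L \<rho>"

definition is_complement :: "('x, 'm) monoid_scheme \<Rightarrow> 'x set \<Rightarrow> 'x set \<Rightarrow> 'x set \<Rightarrow> bool" where
  "is_complement G C K Y \<longleftrightarrow>
     subgroup C G \<and> C \<subseteq> Y \<and> C \<inter> K = {\<one>\<^bsub>G\<^esub>} \<and> set_mult G C K = Y"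

text \<open>The complement C_L(delta) = {(l, t_L(l) + delta(l))}; C_L = C_L(0).\<close>
definition Cpl :: "'a set \<Rightarrow> ('a \<Rightarrow> 'b::ab_group_add) \<Rightarrow> ('a \<Rightarrow> 'b) \<Rightarrow> ('a \<times> 'b) set" where
  "Cpl L tL \<delta> = (\<lambda>l. (l, tL l + \<delta> l)) ` L"

text \<open>zeta_{L,H,g}(l) = (c_H(l^g)^{-1})^{g^{-1}} c_L(l), an element of S, where l^g = l^{epsilon(g)}.\<close>
definition zeta :: "'a monoid \<Rightarrow> ('b::ab_group_add \<Rightarrow> 'a \<Rightarrow> 'b) \<Rightarrow> ('a \<Rightarrow> 'a \<Rightarrow> 'b)
    \<Rightarrow> ('a \<Rightarrow> 'b) \<Rightarrow> ('a \<Rightarrow> 'b) \<Rightarrow> 'a \<times> 'b \<Rightarrow> 'a \<Rightarrow> 'a \<times> 'b" where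
  "zeta P act \<rho> tL tH g l =
     (let S = Ext P act \<rho>; lg = conj P l (fst g)
      in conj S (inv\<^bsub>S\<^esub> (lg, tH lg)) (inv\<^bsub>S\<^esub> g) \<otimes>\<^bsub>S\<^esub> (l, tL l))"

text \<open>zeta viewed as a T-valued map (T = {(1,t)} identified with 'b).\<close>
definition zetaT :: "'a monoid \<Rightarrow> ('b::ab_group_add \<Rightarrow> 'a \<Rightarrow> 'b) \<Rightarrow> ('a \<Rightarrow> 'a \<Rightarrow> 'b)
    \<Rightarrow> ('a \<Rightarrow> 'b) \<Rightarrow> ('a \<Rightarrow> 'b) \<Rightarrow> 'a \<times> 'b \<Rightarrow> 'a \<Rightarrow> 'b" where
  "zetaT P act \<rho> tL tH g l = snd (zeta P act \<rho> tL tH g l)"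

definition zeta_hat :: "'a monoid \<Rightarrow> ('b::ab_group_add \<Rightarrow> 'a \<Rightarrow> 'b) \<Rightarrow> ('a \<Rightarrow> 'a \<Rightarrow> 'b)
    \<Rightarrow> ('a \<Rightarrow> 'b) \<Rightarrow> ('a \<Rightarrow> 'b) \<Rightarrow> 'a \<Rightarrow> 'a \<Rightarrow> 'b" where
  "zeta_hat P act \<rho> tL tH w l =
     (let lw = conj P l w
      in act (act (tL l) w - tH lw + \<rho> l w - \<rho> w lw) (inv\<^bsub>P\<^esub> w))"

definition lambda_w :: "'a monoid \<Rightarrow> ('b::ab_group_add \<Rightarrow> 'a \<Rightarrow> 'b) \<Rightarrow> 'b \<Rightarrow> 'a \<Rightarrow> 'a \<Rightarrow> 'b" where
  "lambda_w P act t w l = act (act t (conj P l w) - t) (inv\<^bsub>P\<^esub> w)"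

end

theory Submission
  imports Defs
begin

text \<open>Everything reduces to conjugation in Ext(\<rho>):
  (l, u)^(w, t) = (l^w, u^w + t - t^(l^w) + \<rho>(l, w) - \<rho>(w, l^w)).
  Since \<zeta>_{L,H,g}(l)^g = c_H(l^g)^-1 c_L(l)^g lies in T, this formula gives \<zeta> explicitly,
  which is (a); its dependence on t is the cocycle \<lambda>_t^w, which gives (b).
  Rewritten as (l, t_L(l) + u)^g = (l^w, t_H(l^w) + \<zeta>(l)^w + u^w), it shows that the conjugate
  of the element of C_L(\<gamma>) over l lies in C_H(\<sigma>) exactly when \<zeta>(l) = \<sigma>^w(l) - \<gamma>(l),
  and is that element itself exactly when moreover l^w = l. As \<sigma>^w is a cocycle, (c) and (d)
  follow; the witnesses for (c) are \<gamma> = -\<zeta> and \<sigma> = 0.\<close>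

context group
begin

lemma conj_closed [simp]: "x \<in> carrier G \<Longrightarrow> g \<in> carrier G \<Longrightarrow> conj G x g \<in> carrier G"
  by (simp add: conj_def)

lemma conj_eq_iff:
  "x \<in> carrier G \<Longrightarrow> g \<in> carrier G \<Longrightarrow> y \<in> carrier G \<Longrightarrow> conj G x g = y \<longleftrightarrow> x \<otimes> g = g \<otimes> y"
  unfolding conj_def by (simp add: m_assoc inv_solve_left')

lemma conj_eq_self_iff_commute:
  "x \<in> carrier G \<Longrightarrow> g \<in> carrier G \<Longrightarrow> conj G x g = x \<longleftrightarrow> x \<otimes> g = g \<otimes> x"
  by (simp add: conj_eq_iff)

lemma conj_one_left [simp]: "g \<in> carrier G \<Longrightarrow> conj G \<one> g = \<one>"
  by (simp add: conj_def)

lemma conj_mult: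
  "x \<in> carrier G \<Longrightarrow> y \<in> carrier G \<Longrightarrow> g \<in> carrier G \<Longrightarrow>
    conj G (x \<otimes> y) g = conj G x g \<otimes> conj G y g"
  unfolding conj_def by (simp add: m_assoc) (simp add: m_assoc[symmetric])

lemma conj_conj_inv [simp]:
  "x \<in> carrier G \<Longrightarrow> g \<in> carrier G \<Longrightarrow> conj G (conj G x (inv g)) g = x"
  unfolding conj_def by (simp add: m_assoc) (simp add: m_assoc[symmetric])

lemma conj_inject:
  "x \<in> carrier G \<Longrightarrow> y \<in> carrier G \<Longrightarrow> g \<in> carrier G \<Longrightarrow> conj G x g = conj G y g \<longleftrightarrow> x = y"
  unfolding conj_def by (simp add: m_assoc)

end

locale right_module =
  fixes P :: "'a monoid" (structure) and act :: "'b::ab_group_add \<Rightarrow> 'a \<Rightarrow> 'b"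
  assumes group: "group P" and right_action: "right_action P act"
begin

sublocale group P by (rule group)

lemma act_add: "g \<in> carrier P \<Longrightarrow> act (m + n) g = act m g + act n g"
  using right_action unfolding right_action_def by blast

lemma act_one [simp]: "act m \<one> = m"
  using right_action unfolding right_action_def by blast

lemma act_mult: "g \<in> carrier P \<Longrightarrow> h \<in> carrier P \<Longrightarrow> act m (g \<otimes> h) = act (act m g) h"
  using right_action unfolding right_action_def by blast

lemma act_zero [simp]: "g \<in> carrier P \<Longrightarrow> act 0 g = 0"
  using act_add[of g 0 0] by simp

lemma act_neg: "g \<in> carrier P \<Longrightarrow> act (- m) g = - act m g"
  using act_add[of g m "- m"] by (simp add: add_eq_0_iff)

lemma act_diff: "g \<in> carrier P \<Longrightarrow> act (m - n) g = act m g - act n g"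
  using act_add[of g m "- n"] act_neg[of g n] by simp

lemma act_act_inv [simp]: "g \<in> carrier P \<Longrightarrow> act (act m g) (inv g) = m"
  by (simp flip: act_mult)

lemma act_inv_act [simp]: "g \<in> carrier P \<Longrightarrow> act (act m (inv g)) g = m"
  by (simp flip: act_mult)

lemma act_eq_iff: "g \<in> carrier P \<Longrightarrow> act m g = n \<longleftrightarrow> m = act n (inv g)"
  by auto

lemma act_conj:
  "x \<in> carrier P \<Longrightarrow> g \<in> carrier P \<Longrightarrow>
    act (act m (conj P x g)) (inv g) = act (act m (inv g)) x"
  unfolding conj_def by (simp flip: act_mult add: m_assoc)

lemma Z1_cong: "subgroup L P \<Longrightarrow> (\<And>l. l \<in> L \<Longrightarrow> f l = f' l) \<Longrightarrow> Z1 P act L f \<longleftrightarrow> Z1 P act L f'"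
  unfolding Z1_def by (simp add: subgroup.m_closed subgroup.one_closed)

lemma Z1_zero: "subgroup L P \<Longrightarrow> Z1 P act L (\<lambda>_. 0)"
  unfolding Z1_def by (auto dest: subgroup.mem_carrier)

lemma Z1_add: "subgroup L P \<Longrightarrow> Z1 P act L f \<Longrightarrow> Z1 P act L f' \<Longrightarrow> Z1 P act L (\<lambda>l. f l + f' l)"
  unfolding Z1_def by (auto simp: act_add dest: subgroup.mem_carrier)

lemma Z1_neg: "subgroup L P \<Longrightarrow> Z1 P act L f \<Longrightarrow> Z1 P act L (\<lambda>l. - f l)"
  unfolding Z1_def by (auto simp: act_neg dest: subgroup.mem_carrier)

lemma Z1_diff: "subgroup L P \<Longrightarrow> Z1 P act L f \<Longrightarrow> Z1 P act L f' \<Longrightarrow> Z1 P act L (\<lambda>l. f l - f' l)"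
  using Z1_add[of L f "\<lambda>l. - f' l"] Z1_neg[of L f'] by simp

lemma Z1_inner: "Z1 P act (carrier P) (\<lambda>x. act t x - t)"
  unfolding Z1_def by (simp add: act_mult act_diff)

lemma Z1_conj:
  assumes \<sigma>: "Z1 P act H \<sigma>" and L: "subgroup L P" and g: "g \<in> carrier P"
    and LgH: "\<forall>l\<in>L. conj P l g \<in> H"
  shows "Z1 P act L (\<lambda>l. act (\<sigma> (conj P l g)) (inv g))"
  unfolding Z1_def
proof (intro conjI ballI)
  have "\<sigma> \<one> = 0" using \<sigma> unfolding Z1_def by blast
  then show "act (\<sigma> (conj P \<one> g)) (inv g) = 0"
    using g by simp
next
  fix l m assume lm: "l \<in> L" "m \<in> L"
  then have c: "l \<in> carrier P" "m \<in> carrier P"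
    using subgroup.mem_carrier[OF L] by blast+
  have "\<sigma> (conj P (l \<otimes> m) g) = \<sigma> (conj P l g \<otimes> conj P m g)"
    using c g by (simp add: conj_mult)
  also have "\<dots> = act (\<sigma> (conj P l g)) (conj P m g) + \<sigma> (conj P m g)"
    using \<sigma> LgH lm unfolding Z1_def by blast
  finally show "act (\<sigma> (conj P (l \<otimes> m) g)) (inv g) =
      act (act (\<sigma> (conj P l g)) (inv g)) m + act (\<sigma> (conj P m g)) (inv g)"
    using c g by (simp add: act_add act_conj)
qed

lemma Z1_lambda_w: "subgroup L P \<Longrightarrow> w \<in> carrier P \<Longrightarrow> Z1 P act L (lambda_w P act t w)"
  unfolding lambda_w_def by (rule Z1_conj[OF Z1_inner]) (auto dest: subgroup.mem_carrier)

end

locale group_extension = right_module +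
  fixes \<rho> :: "'a \<Rightarrow> 'a \<Rightarrow> 'b::ab_group_add"
  assumes cocycle: "Z2 P act \<rho>"
begin

abbreviation S :: "('a \<times> 'b) monoid" where "S \<equiv> Ext P act \<rho>"

lemma rho_one_left [simp]: "g \<in> carrier P \<Longrightarrow> \<rho> \<one> g = 0"
  and rho_one_right [simp]: "g \<in> carrier P \<Longrightarrow> \<rho> g \<one> = 0"
  using cocycle unfolding Z2_def by auto

lemma rho_cocycle:
  "g \<in> carrier P \<Longrightarrow> h \<in> carrier P \<Longrightarrow> k \<in> carrier P \<Longrightarrow>
    act (\<rho> g h) k + \<rho> (g \<otimes> h) k = \<rho> h k + \<rho> g (h \<otimes> k)"
  using cocycle unfolding Z2_def by blast

lemma carrier_Ext [simp]: "carrier S = carrier P \<times> UNIV"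
  and Ext_mult [simp]: "(g, m) \<otimes>\<^bsub>S\<^esub> (h, n) = (g \<otimes> h, act m h + n + \<rho> g h)"
  and Ext_one [simp]: "\<one>\<^bsub>S\<^esub> = (\<one>, 0)"
  by (simp_all add: Ext_def)

lemma Ext_group: "group S"
proof (rule groupI)
  fix x y z assume "x \<in> carrier S" "y \<in> carrier S" "z \<in> carrier S"
  then obtain g m h n k q where xyz: "x = (g, m)" "y = (h, n)" "z = (k, q)"
    and c: "g \<in> carrier P" "h \<in> carrier P" "k \<in> carrier P" by auto
  have "act (act m h + n + \<rho> g h) k + q + \<rho> (g \<otimes> h) k
      = act m (h \<otimes> k) + (act n k + q + \<rho> h k) + \<rho> g (h \<otimes> k)"
    using c rho_cocycle[of g h k] by (simp add: act_add act_mult algebra_simps)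
  then show "x \<otimes>\<^bsub>S\<^esub> y \<otimes>\<^bsub>S\<^esub> z = x \<otimes>\<^bsub>S\<^esub> (y \<otimes>\<^bsub>S\<^esub> z)"
    using c by (simp add: xyz m_assoc)
next
  fix x assume "x \<in> carrier S"
  then obtain g m where x: "x = (g, m)" and g: "g \<in> carrier P" by auto
  let ?y = "(inv g, act (- m - \<rho> (inv g) g) (inv g))"
  have "?y \<otimes>\<^bsub>S\<^esub> x = \<one>\<^bsub>S\<^esub>" using g by (simp add: x)
  then show "\<exists>y\<in>carrier S. y \<otimes>\<^bsub>S\<^esub> x = \<one>\<^bsub>S\<^esub>" using g by force
qed auto

sublocale S: group S by (rule Ext_group)

lemma Ext_conj:
  assumes "l \<in> carrier P" "w \<in> carrier P"
  shows "conj S (l, u) (w, t) = (conj P l w,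
    act u w + t - act t (conj P l w) + \<rho> l w - \<rho> w (conj P l w))"
proof -
  have "w \<otimes> conj P l w = l \<otimes> w"
    using assms by (simp add: conj_def m_assoc[symmetric])
  then show ?thesis using assms by (simp add: S.conj_eq_iff algebra_simps)
qed

lemma Ext_conj_central: "w \<in> carrier P \<Longrightarrow> conj S (\<one>, u) (w, t) = (\<one>, act u w)"
  by (simp add: Ext_conj)

lemma Ext_inv_mult_same_fst:
  assumes "x \<in> carrier P" shows "inv\<^bsub>S\<^esub> (x, a) \<otimes>\<^bsub>S\<^esub> (x, b) = (\<one>, b - a)"
  using assms by (simp add: S.inv_solve_left')

lemma zeta_eq:
  assumes l: "l \<in> carrier P" and w: "w \<in> carrier P"
  shows "zeta P act \<rho> tL tH (w, t) l = (\<one>, act (act (tL l) w + t - act t (conj P l w)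
    + \<rho> l w - \<rho> w (conj P l w) - tH (conj P l w)) (inv w))"
    (is "_ = (\<one>, act ?v (inv w))")
proof -
  define lg where "lg = conj P l w"
  have lg: "lg \<in> carrier P" using l w by (simp add: lg_def)
  have c: "(lg, tH lg) \<in> carrier S" "(w, t) \<in> carrier S" "(l, tL l) \<in> carrier S"
    using l w lg by simp_all
  have z: "zeta P act \<rho> tL tH (w, t) l \<in> carrier S"
    unfolding zeta_def Let_def fst_conv lg_def[symmetric] using c by (simp del: carrier_Ext)
  have "conj S (zeta P act \<rho> tL tH (w, t) l) (w, t)
      = inv\<^bsub>S\<^esub> (lg, tH lg) \<otimes>\<^bsub>S\<^esub> conj S (l, tL l) (w, t)"
    unfolding zeta_def Let_def fst_conv lg_def[symmetric] using c
    by (simp only: S.conj_mult S.conj_closed S.inv_closed S.conj_conj_inv)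
  also have "\<dots> = (\<one>, ?v)"
    using l w lg by (simp add: Ext_conj Ext_inv_mult_same_fst lg_def algebra_simps)
  also have "\<dots> = conj S (\<one>, act ?v (inv w)) (w, t)"
    using w by (simp add: Ext_conj_central)
  finally show ?thesis
    using z w by (subst (asm) S.conj_inject) auto
qed

lemma zeta_eq_zeta_hat_minus_lambda_w:
  assumes "l \<in> carrier P" "w \<in> carrier P"
  shows "zeta P act \<rho> tL tH (w, t) l = (\<one>, zeta_hat P act \<rho> tL tH w l - lambda_w P act t w l)"
  using assms unfolding zeta_eq[OF assms] zeta_hat_def lambda_w_def Let_def
  by (simp add: act_diff[symmetric] algebra_simps)

lemma Ext_conj_Cpl_elem:
  assumes "l \<in> carrier P" "w \<in> carrier P"
  shows "conj S (l, tL l + u) (w, t)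
    = (conj P l w, tH (conj P l w) + act (zetaT P act \<rho> tL tH (w, t) l) w + act u w)"
  using assms unfolding Ext_conj[OF assms] zetaT_def zeta_eq[OF assms]
  by (simp add: act_add algebra_simps)

lemma Ext_conj_Cpl_elem_eq_iff:
  assumes "l \<in> carrier P" "w \<in> carrier P"
  shows "conj S (l, tL l + u) (w, t) = (h, tH h + s)
    \<longleftrightarrow> h = conj P l w \<and> zetaT P act \<rho> tL tH (w, t) l = act s (inv w) - u"
proof -
  have "tH h + act z w + act u w = tH h + s \<longleftrightarrow> z = act s (inv w) - u" for z
  proof -
    have "tH h + act z w + act u w = tH h + s \<longleftrightarrow> act (z + u) w = s"
      using assms(2) by (simp add: act_add add.assoc)
    also have "\<dots> \<longleftrightarrow> z + u = act s (inv w)"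
      using assms(2) by (rule act_eq_iff)
    also have "\<dots> \<longleftrightarrow> z = act s (inv w) - u"
      by (simp add: eq_diff_eq)
    finally show ?thesis .
  qed
  then show ?thesis
    unfolding Ext_conj_Cpl_elem[OF assms, where tH = tH] prod.inject by metis
qed

lemma Ext_coset_kernel:
  assumes "w \<in> carrier P"
  shows "(w, t) <#\<^bsub>S\<^esub> ({\<one>} \<times> UNIV) = {w} \<times> UNIV"
  using assms unfolding l_coset_def by (auto simp: image_iff) (metis add.commute diff_add_cancel)

lemma Z1_zetaT_independent_of_t:
  assumes L: "subgroup L P" and w: "w \<in> carrier P"
    and Z: "Z1 P act L (zetaT P act \<rho> tL tH (w, t))"
  shows "Z1 P act L (zetaT P act \<rho> tL tH (w, t'))"
proof -
  have "zetaT P act \<rho> tL tH (w, t') l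
      = zetaT P act \<rho> tL tH (w, t) l + lambda_w P act t w l - lambda_w P act t' w l" if "l \<in> L" for l
    using that L w by (simp add: zetaT_def zeta_eq_zeta_hat_minus_lambda_w subgroup.mem_carrier)
  moreover have "Z1 P act L (\<lambda>l. zetaT P act \<rho> tL tH (w, t) l
      + lambda_w P act t w l - lambda_w P act t' w l)"
    by (rule Z1_diff[OF L Z1_add[OF L Z Z1_lambda_w[OF L w]] Z1_lambda_w[OF L w]])
  ultimately show ?thesis
    by (rule Z1_cong[OF L, THEN iffD2])
qed

lemma conj_Cpl_subset_Cpl_iff_Z1_zetaT:
  assumes L: "subgroup L P" and H: "subgroup H P" and w: "w \<in> carrier P"
    and LgH: "\<forall>l\<in>L. conj P l w \<in> H"
  shows "(\<exists>\<gamma> \<sigma>. Z1 P act L \<gamma> \<and> Z1 P act H \<sigma> \<and>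
      (\<lambda>x. conj S x (w, t)) ` Cpl L tL \<gamma> \<subseteq> Cpl H tH \<sigma>)
    \<longleftrightarrow> Z1 P act L (zetaT P act \<rho> tL tH (w, t))"
proof
  assume "\<exists>\<gamma> \<sigma>. Z1 P act L \<gamma> \<and> Z1 P act H \<sigma> \<and>
      (\<lambda>x. conj S x (w, t)) ` Cpl L tL \<gamma> \<subseteq> Cpl H tH \<sigma>"
  then obtain \<gamma> \<sigma> where \<gamma>: "Z1 P act L \<gamma>" and \<sigma>: "Z1 P act H \<sigma>"
    and sub: "(\<lambda>x. conj S x (w, t)) ` Cpl L tL \<gamma> \<subseteq> Cpl H tH \<sigma>" by blast
  have "zetaT P act \<rho> tL tH (w, t) l = act (\<sigma> (conj P l w)) (inv w) - \<gamma> l" if l: "l \<in> L" for l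
  proof -
    from sub l obtain h where "conj S (l, tL l + \<gamma> l) (w, t) = (h, tH h + \<sigma> h)"
      unfolding Cpl_def by blast
    then show ?thesis
      using l w L by (simp add: Ext_conj_Cpl_elem_eq_iff subgroup.mem_carrier)
  qed
  moreover have "Z1 P act L (\<lambda>l. act (\<sigma> (conj P l w)) (inv w) - \<gamma> l)"
    by (rule Z1_diff[OF L Z1_conj[OF \<sigma> L w LgH] \<gamma>])
  ultimately show "Z1 P act L (zetaT P act \<rho> tL tH (w, t))"
    by (rule Z1_cong[OF L, THEN iffD2])
next
  assume Z: "Z1 P act L (zetaT P act \<rho> tL tH (w, t))"
  let ?\<gamma> = "\<lambda>l. - zetaT P act \<rho> tL tH (w, t) l"
  have "conj S (l, tL l + ?\<gamma> l) (w, t) \<in> Cpl H tH (\<lambda>_. 0)" if l: "l \<in> L" for l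
  proof -
    have "conj S (l, tL l + ?\<gamma> l) (w, t) = (conj P l w, tH (conj P l w) + 0)"
      using l w L by (intro Ext_conj_Cpl_elem_eq_iff[THEN iffD2]) (auto dest: subgroup.mem_carrier)
    then show ?thesis
      using l LgH unfolding Cpl_def by blast
  qed
  then have "(\<lambda>x. conj S x (w, t)) ` Cpl L tL ?\<gamma> \<subseteq> Cpl H tH (\<lambda>_. 0)"
    unfolding Cpl_def by blast
  then show "\<exists>\<gamma> \<sigma>. Z1 P act L \<gamma> \<and> Z1 P act H \<sigma> \<and>
      (\<lambda>x. conj S x (w, t)) ` Cpl L tL \<gamma> \<subseteq> Cpl H tH \<sigma>"
    using Z1_neg[OF L Z] Z1_zero[OF H] by blast
qed

lemma Cpl_centralised_iff:
  assumes L: "L \<subseteq> carrier P" and w: "w \<in> carrier P"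
  shows "(\<forall>x\<in>Cpl L tL \<gamma>. x \<otimes>\<^bsub>S\<^esub> (w, t) = (w, t) \<otimes>\<^bsub>S\<^esub> x)
    \<longleftrightarrow> (\<forall>l\<in>L. l \<otimes> w = w \<otimes> l)
      \<and> (\<forall>l\<in>L. zetaT P act \<rho> tL tL (w, t) l = act (\<gamma> (conj P l w)) (inv w) - \<gamma> l)"
proof -
  have "(l, tL l + \<gamma> l) \<otimes>\<^bsub>S\<^esub> (w, t) = (w, t) \<otimes>\<^bsub>S\<^esub> (l, tL l + \<gamma> l)
    \<longleftrightarrow> l \<otimes> w = w \<otimes> l
      \<and> zetaT P act \<rho> tL tL (w, t) l = act (\<gamma> (conj P l w)) (inv w) - \<gamma> l"
    if l: "l \<in> carrier P" for l
  proof -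
    have "(l, tL l + \<gamma> l) \<otimes>\<^bsub>S\<^esub> (w, t) = (w, t) \<otimes>\<^bsub>S\<^esub> (l, tL l + \<gamma> l)
      \<longleftrightarrow> conj S (l, tL l + \<gamma> l) (w, t) = (l, tL l + \<gamma> l)"
      using l w by (intro S.conj_eq_self_iff_commute[symmetric]) simp_all
    also have "\<dots> \<longleftrightarrow> l = conj P l w
      \<and> zetaT P act \<rho> tL tL (w, t) l = act (\<gamma> l) (inv w) - \<gamma> l"
      by (rule Ext_conj_Cpl_elem_eq_iff[OF l w])
    also have "\<dots> \<longleftrightarrow> l \<otimes> w = w \<otimes> l
      \<and> zetaT P act \<rho> tL tL (w, t) l = act (\<gamma> (conj P l w)) (inv w) - \<gamma> l"
      using conj_eq_self_iff_commute[OF l w] by metis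
    finally show ?thesis .
  qed
  then show ?thesis
    using L unfolding Cpl_def by blast
qed

end

theorem lemma3p3:
  fixes P :: "'a monoid" and act :: "'b::ab_group_add \<Rightarrow> 'a \<Rightarrow> 'b"
    and \<rho> :: "'a \<Rightarrow> 'a \<Rightarrow> 'b" and p :: nat
    and L H :: "'a set" and tL tH :: "'a \<Rightarrow> 'b" and w :: 'a and t :: 'b
  assumes grp: "group P" and fin: "finite (carrier P)"
    and pr: "Factorial_Ring.prime p" and pgrp: "\<exists>k. card (carrier P) = p ^ k"
    and mod: "right_action P act" and coc: "Z2 P act \<rho>"
    and LL: "calL P act \<rho> p L" and HL: "calL P act \<rho> p H"
    and CL: "is_complement (Ext P act \<rho>) (Cpl L tL (\<lambda>_. 0)) ({\<one>\<^bsub>P\<^esub>} \<times> UNIV) (L \<times> UNIV)"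
    and CH: "is_complement (Ext P act \<rho>) (Cpl H tH (\<lambda>_. 0)) ({\<one>\<^bsub>P\<^esub>} \<times> UNIV) (H \<times> UNIV)"
    and w: "w \<in> carrier P"
    and LgH: "\<forall>l\<in>L. conj P l w \<in> H"
  shows
    "(\<forall>l\<in>L. zeta P act \<rho> tL tH (w, t) l
              = (\<one>\<^bsub>P\<^esub>, zeta_hat P act \<rho> tL tH w l - lambda_w P act t w l))
     \<and> (Z1 P act L (zetaT P act \<rho> tL tH (w, t)) \<longrightarrow>
          (\<forall>h \<in> (w, t) <#\<^bsub>Ext P act \<rho>\<^esub> ({\<one>\<^bsub>P\<^esub>} \<times> UNIV).
              Z1 P act L (zetaT P act \<rho> tL tH h)))
     \<and> ((\<exists>\<gamma> \<sigma>. Z1 P act L \<gamma> \<and> Z1 P act H \<sigma> \<and>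
            (\<lambda>x. conj (Ext P act \<rho>) x (w, t)) ` Cpl L tL \<gamma> \<subseteq> Cpl H tH \<sigma>)
        \<longleftrightarrow> Z1 P act L (zetaT P act \<rho> tL tH (w, t)))
     \<and> (H = L \<longrightarrow>
          (\<forall>\<gamma>. Z1 P act L \<gamma> \<longrightarrow>
            ((\<forall>x\<in>Cpl L tL \<gamma>. x \<otimes>\<^bsub>Ext P act \<rho>\<^esub> (w, t) = (w, t) \<otimes>\<^bsub>Ext P act \<rho>\<^esub> x)
             \<longleftrightarrow> ((\<forall>l\<in>L. l \<otimes>\<^bsub>P\<^esub> w = w \<otimes>\<^bsub>P\<^esub> l) \<and>
                  (\<forall>l\<in>L. zetaT P act \<rho> tL tL (w, t) l
                          = act (\<gamma> (conj P l w)) (inv\<^bsub>P\<^esub> w) - \<gamma> l)))))"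
proof -
  interpret group_extension P act \<rho>
    by (intro group_extension.intro group_extension_axioms.intro right_module.intro grp mod coc)
  have L: "subgroup L P" and H: "subgroup H P"
    using LL HL unfolding calL_def elementary_abelian_def by blast+
  show ?thesis
    using zeta_eq_zeta_hat_minus_lambda_w[OF subgroup.mem_carrier[OF L] w]
      conj_Cpl_subset_Cpl_iff_Z1_zetaT[OF L H w LgH]
      Cpl_centralised_iff[OF subgroup.subset[OF L] w]
    by (auto simp: Ext_coset_kernel w intro: Z1_zetaT_independent_of_t[OF L w])
qed

end
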